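(* Let $a_0,a_1,a_2,b_0,b_1,b_2$ be real numbers and let $(T(n,k))_{n\ge 0,\,k\in\mathbb{Z}}$ be defined by $T(0,0)=1$, $T(n,k)=0$ whenever $k<0$ or $k>n$, and \[ T(n,k)=(a_0+a_1k+a_2n)\,T(n-1,k)+(b_0+b_1k+b_2n)\,T(n-1,k-1)\qquad(n\ge1). \] Then for all integers $0\le k\le n$, \[ T(n,k)=\sum_{1\le p_1<\cdots<p_{n-k}\le n}\ \prod_{i=1}^{n-k}\big((a_2+a_1)p_i-a_1i+a_0\big)\ \prod_{i=1}^{k}\Big(b_0+(b_1+b_2)i+b_2\sum_{j=0}^{i-1}\#\{l: p_l-l=j\}\Big). \]
   Context: The outer sum runs over strictly increasing sequences of $n-k$ integers in $\{1,\dots,n\}$; $\#$ denotes cardinality; empty products equal $1$. *)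

theory Defs
  imports Main "HOL.Real"
begin

fun T :: "real \<Rightarrow> real \<Rightarrow> real \<Rightarrow> real \<Rightarrow> real \<Rightarrow> real \<Rightarrow> nat \<Rightarrow> int \<Rightarrow> real" where
  "T a0 a1 a2 b0 b1 b2 0 k = (if k = 0 then 1 else 0)"
| "T a0 a1 a2 b0 b1 b2 (Suc m) k =
     (if k < 0 \<or> k > int (Suc m) then 0
      else (a0 + a1 * of_int k + a2 * of_nat (Suc m)) * T a0 a1 a2 b0 b1 b2 m k
         + (b0 + b1 * of_int k + b2 * of_nat (Suc m)) * T a0 a1 a2 b0 b1 b2 m (k - 1))"

text \<open>Strictly increasing sequences p_1 < ... < p_m in {1..n}, represented as lists
  (p_i = ps ! (i - 1)).\<close>
definition incseqs :: "nat \<Rightarrow> nat \<Rightarrow> nat list set" where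
  "incseqs m n = {ps. sorted_wrt (<) ps \<and> length ps = m \<and> set ps \<subseteq> {1..n}}"

end

theory Submission
  imports Defs
begin

(* Induction on n, splitting the sequences p for T(n,k) according to whether p_{n-k} = n.
  If so, dropping n leaves a sequence for T(n-1,k); the dropped factor of the first product is
  a0 + a1 k + a2 n, and the counts in the second product are unchanged, since p_{n-k} - (n-k) = k.
  Otherwise p is a sequence for T(n-1,k-1) and only the factor i = k of the second product is new.
  As p_l - l ranges over {0..k-1} for every l, the counts in that factor add up to n - k,
  so it equals b0 + b1 k + b2 n. *)

lemma T_eq_0_outside: "k < 0 \<or> k > int n \<Longrightarrow> T a0 a1 a2 b0 b1 b2 n k = 0"
  by (induction n arbitrary: k) auto

lemma strict_sorted_nth_add_le:
  fixes ps :: "nat list"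
  assumes "sorted_wrt (<) ps" "i \<le> j" "j < length ps"
  shows "ps ! i + (j - i) \<le> ps ! j"
  using assms(2,3)
proof (induction j rule: dec_induct)
  case (step j)
  then have "ps ! j < ps ! Suc j"
    using sorted_wrt_nth_less[OF assms(1)] by simp
  then show ?case using step by simp
qed simp

lemma finite_incseqs: "finite (incseqs L n)"
proof -
  have "incseqs L n \<subseteq> {xs. set xs \<subseteq> {1..n} \<and> length xs = L}"
    by (auto simp: incseqs_def)
  then show ?thesis
    using finite_lists_length_eq[of "{1..n}" L] finite_subset by blast
qed

lemma incseqs_0: "incseqs 0 n = {[]}"
  by (auto simp: incseqs_def)

lemma incseqs_nth_bounds:
  assumes "ps \<in> incseqs L m" "i < L"
  shows "Suc i \<le> ps ! i" "ps ! i + L \<le> m + Suc i"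
proof -
  have ps: "sorted_wrt (<) ps" "length ps = L" "set ps \<subseteq> {1..m}"
    using assms(1) by (auto simp: incseqs_def)
  have "ps ! 0 \<in> set ps" "ps ! (L - 1) \<in> set ps"
    using ps(2) assms(2) by simp_all
  then have "1 \<le> ps ! 0" "ps ! (L - 1) \<le> m"
    using ps(3) by auto
  moreover have "ps ! 0 + (i - 0) \<le> ps ! i" "ps ! i + (L - 1 - i) \<le> ps ! (L - 1)"
    by (rule strict_sorted_nth_add_le[OF ps(1)]; use ps(2) assms(2) in simp)+
  ultimately show "Suc i \<le> ps ! i" "ps ! i + L \<le> m + Suc i"
    using assms(2) by linarith+
qed

lemma incseqs_eq_empty: "m < L \<Longrightarrow> incseqs L m = {}"
  using incseqs_nth_bounds[of _ L m "L - 1"] by fastforce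

lemma incseqs_Suc:
  "incseqs (Suc L) (Suc m) = incseqs (Suc L) m \<union> (\<lambda>qs. qs @ [Suc m]) ` incseqs L m"
proof (intro equalityI subsetI)
  fix ps assume ps: "ps \<in> incseqs (Suc L) (Suc m)"
  show "ps \<in> incseqs (Suc L) m \<union> (\<lambda>qs. qs @ [Suc m]) ` incseqs L m"
  proof (cases "Suc m \<in> set ps")
    case False
    then show ?thesis using ps by (auto simp: incseqs_def le_Suc_eq)
  next
    case True
    obtain qs x where qs: "ps = qs @ [x]"
      using True by (metis rev_exhaust empty_iff list.set(1))
    have "sorted_wrt (<) qs" "\<forall>y\<in>set qs. y < x" "x \<le> Suc m" "set qs \<subseteq> {1..Suc m}"
      using ps qs by (auto simp: incseqs_def sorted_wrt_append)
    moreover from this have "x = Suc m"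
      using True qs by fastforce
    ultimately have "qs \<in> incseqs L m"
      using ps qs by (force simp: incseqs_def)
    then show ?thesis using qs \<open>x = Suc m\<close> by blast
  qed
qed (force simp: incseqs_def sorted_wrt_append)

lemma incseqs_Suc_disjoint:
  "incseqs L m \<inter> (\<lambda>qs. qs @ [Suc m]) ` incseqs L' m = {}"
  by (auto simp: incseqs_def)

definition shift_count :: "nat \<Rightarrow> nat list \<Rightarrow> nat \<Rightarrow> nat" where
  "shift_count L ps j = card {l \<in> {1..L}. int (ps ! (l - 1)) - int l = int j}"

lemma sum_shift_count:
  assumes "ps \<in> incseqs L m"
  shows "(\<Sum>j \<le> m - L. shift_count L ps j) = L"
proof -
  have "(\<Sum>j \<le> m - L. shift_count L ps j)
      = card (\<Union>j \<le> m - L. {l \<in> {1..L}. int (ps ! (l - 1)) - int l = int j})"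
    unfolding shift_count_def by (rule card_UN_disjoint[symmetric]) auto
  also have "(\<Union>j \<le> m - L. {l \<in> {1..L}. int (ps ! (l - 1)) - int l = int j}) = {1..L}"
  proof (intro equalityI subsetI)
    fix l assume l: "l \<in> {1..L}"
    then have "Suc (l - 1) \<le> ps ! (l - 1)" "ps ! (l - 1) + L \<le> m + Suc (l - 1)"
      using incseqs_nth_bounds[OF assms, of "l - 1"] by auto
    moreover have "Suc (l - 1) = l"
      using l by simp
    ultimately have "l \<le> ps ! (l - 1)" "ps ! (l - 1) - l \<le> m - L"
      by linarith+
    then show "l \<in> (\<Union>j \<le> m - L. {l \<in> {1..L}. int (ps ! (l - 1)) - int l = int j})"
      using l by (auto intro!: bexI[of _ "ps ! (l - 1) - l"])
  qed auto
  finally show ?thesis by simp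
qed

lemma shift_count_snoc:
  assumes "length qs = L" "int x - int (Suc L) \<noteq> int j"
  shows "shift_count (Suc L) (qs @ [x]) j = shift_count L qs j"
proof -
  have "{l \<in> {1..Suc L}. int ((qs @ [x]) ! (l - 1)) - int l = int j}
      = {l \<in> {1..L}. int (qs ! (l - 1)) - int l = int j}"
    using assms by (auto simp: nth_append le_Suc_eq)
  then show ?thesis unfolding shift_count_def by simp
qed

context
  fixes a0 a1 a2 b0 b1 b2 :: real
begin

definition a_prod :: "nat \<Rightarrow> nat list \<Rightarrow> real" where
  "a_prod L ps = (\<Prod>i = 1..L. (a2 + a1) * real (ps ! (i - 1)) - a1 * real i + a0)"

definition b_prod :: "nat \<Rightarrow> nat \<Rightarrow> nat list \<Rightarrow> real" where
  "b_prod L k ps = (\<Prod>i = 1..k. b0 + (b1 + b2) * real i + b2 * (\<Sum>j < i. real (shift_count L ps j)))"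

definition T_sum :: "nat \<Rightarrow> nat \<Rightarrow> real" where
  "T_sum n k = (\<Sum>ps \<in> incseqs (n - k) n. a_prod (n - k) ps * b_prod (n - k) k ps)"

lemma a_prod_snoc:
  assumes "length qs = L"
  shows "a_prod (Suc L) (qs @ [x]) = a_prod L qs * ((a2 + a1) * real x - a1 * real (Suc L) + a0)"
proof -
  have "(\<Prod>i = 1..L. (a2 + a1) * real ((qs @ [x]) ! (i - 1)) - a1 * real i + a0)
      = a_prod L qs"
    unfolding a_prod_def using assms by (intro prod.cong refl) (auto simp: nth_append)
  then show ?thesis unfolding a_prod_def using assms by (simp add: prod.cl_ivl_Suc nth_append)
qed

(* The appended entry has shift k, which none of the counts in b_prod L k looks at. *)
lemma b_prod_snoc:
  assumes "length qs = L"
  shows "b_prod (Suc L) k (qs @ [L + Suc k]) = b_prod L k qs"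
  unfolding b_prod_def using shift_count_snoc[OF assms] by (intro prod.cong sum.cong) auto

lemma b_prod_Suc:
  assumes "ps \<in> incseqs L m" "L + k = m"
  shows "b_prod L (Suc k) ps = b_prod L k ps * (b0 + b1 * real (Suc k) + b2 * real (Suc m))"
proof -
  have "b_prod L (Suc k) ps
      = b_prod L k ps * (b0 + (b1 + b2) * real (Suc k) + b2 * (\<Sum>j < Suc k. real (shift_count L ps j)))"
    unfolding b_prod_def by (simp only: prod.cl_ivl_Suc) simp
  moreover have "(\<Sum>j < Suc k. real (shift_count L ps j)) = real L"
    using sum_shift_count[OF assms(1)] assms(2) lessThan_Suc_atMost
    by (metis add_diff_cancel_left' of_nat_sum)
  moreover have "b0 + (b1 + b2) * real (Suc k) + b2 * real L = b0 + b1 * real (Suc k) + b2 * real (Suc m)"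
    using assms(2)[symmetric] by (simp add: algebra_simps)
  ultimately show ?thesis
    by (simp only:)
qed

lemma T_sum_Suc_avoiding_part:
  assumes "k \<le> m"
  shows "(\<Sum>ps \<in> incseqs (m - k) m. a_prod (m - k) ps * b_prod (m - k) (Suc k) ps)
       = (b0 + b1 * real (Suc k) + b2 * real (Suc m)) * T_sum m k"
  unfolding T_sum_def sum_distrib_left
  using b_prod_Suc assms by (intro sum.cong) simp_all

lemma T_sum_Suc_ending_part:
  assumes "k \<le> m"
  shows "(\<Sum>ps \<in> (\<lambda>qs. qs @ [Suc m]) ` incseqs (m - k) m.
            a_prod (Suc (m - k)) ps * b_prod (Suc (m - k)) k ps)
       = (a0 + a1 * real k + a2 * real (Suc m)) * T_sum m k"
proof -
  have last_factor: "(a2 + a1) * real (Suc m) - a1 * real (Suc (m - k)) + a0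
      = a0 + a1 * real k + a2 * real (Suc m)"
    using assms by (simp add: of_nat_diff algebra_simps)
  have last_shift: "m - k + Suc k = Suc m"
    using assms by simp
  have "(\<Sum>ps \<in> (\<lambda>qs. qs @ [Suc m]) ` incseqs (m - k) m.
            a_prod (Suc (m - k)) ps * b_prod (Suc (m - k)) k ps)
      = (\<Sum>qs \<in> incseqs (m - k) m.
            a_prod (Suc (m - k)) (qs @ [Suc m]) * b_prod (Suc (m - k)) k (qs @ [Suc m]))"
    by (simp add: sum.reindex inj_on_def)
  also have "\<dots> = (\<Sum>qs \<in> incseqs (m - k) m.
            (a0 + a1 * real k + a2 * real (Suc m)) * (a_prod (m - k) qs * b_prod (m - k) k qs))"
  proof (rule sum.cong[OF refl])
    fix qs assume "qs \<in> incseqs (m - k) m"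
    then have len: "length qs = m - k"
      by (simp add: incseqs_def)
    show "a_prod (Suc (m - k)) (qs @ [Suc m]) * b_prod (Suc (m - k)) k (qs @ [Suc m])
        = (a0 + a1 * real k + a2 * real (Suc m)) * (a_prod (m - k) qs * b_prod (m - k) k qs)"
      unfolding a_prod_snoc[OF len] b_prod_snoc[OF len, of k, unfolded last_shift] last_factor
      by (simp only: mult_ac)
  qed
  finally show ?thesis
    unfolding T_sum_def sum_distrib_left .
qed

lemma T_sum_Suc:
  assumes "k \<le> Suc m"
  shows "T_sum (Suc m) k
       = (if k \<le> m then (a0 + a1 * real k + a2 * real (Suc m)) * T_sum m k else 0)
       + (if 0 < k then (b0 + b1 * real k + b2 * real (Suc m)) * T_sum m (k - 1) else 0)"
proof (cases "k = Suc m")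
  case True
  then show ?thesis
    using T_sum_Suc_avoiding_part[of m m] by (simp add: T_sum_def incseqs_0)
next
  case False
  then have k: "k \<le> m" "Suc m - k = Suc (m - k)"
    using assms by auto
  have "T_sum (Suc m) k
      = (\<Sum>ps \<in> incseqs (Suc (m - k)) m. a_prod (Suc (m - k)) ps * b_prod (Suc (m - k)) k ps)
      + (\<Sum>ps \<in> (\<lambda>qs. qs @ [Suc m]) ` incseqs (m - k) m.
            a_prod (Suc (m - k)) ps * b_prod (Suc (m - k)) k ps)"
    unfolding T_sum_def k(2) incseqs_Suc
    by (intro sum.union_disjoint finite_incseqs finite_imageI incseqs_Suc_disjoint)
  also have "(\<Sum>ps \<in> (\<lambda>qs. qs @ [Suc m]) ` incseqs (m - k) m.
            a_prod (Suc (m - k)) ps * b_prod (Suc (m - k)) k ps)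
      = (a0 + a1 * real k + a2 * real (Suc m)) * T_sum m k"
    by (rule T_sum_Suc_ending_part[OF k(1)])
  also have "(\<Sum>ps \<in> incseqs (Suc (m - k)) m. a_prod (Suc (m - k)) ps * b_prod (Suc (m - k)) k ps)
      = (if 0 < k then (b0 + b1 * real k + b2 * real (Suc m)) * T_sum m (k - 1) else 0)"
  proof (cases k)
    case 0
    then show ?thesis by (simp add: incseqs_eq_empty)
  next
    case (Suc k')
    then show ?thesis
      using T_sum_Suc_avoiding_part[of k' m] k by (simp add: Suc_diff_le)
  qed
  finally show ?thesis
    using k by simp
qed

lemma T_eq_T_sum: "k \<le> n \<Longrightarrow> T a0 a1 a2 b0 b1 b2 n (int k) = T_sum n k"
proof (induction n arbitrary: k)
  case 0
  then show ?case by (simp add: T_sum_def incseqs_0 a_prod_def b_prod_def)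
next
  case (Suc m)
  have "T a0 a1 a2 b0 b1 b2 (Suc m) (int k)
      = (if k \<le> m then (a0 + a1 * real k + a2 * real (Suc m)) * T a0 a1 a2 b0 b1 b2 m (int k) else 0)
      + (if 0 < k then (b0 + b1 * real k + b2 * real (Suc m)) * T a0 a1 a2 b0 b1 b2 m (int (k - 1)) else 0)"
    using Suc.prems T_eq_0_outside[of "int k" m] T_eq_0_outside[of "int k - 1" m]
    by (simp add: of_nat_diff)
  also have "\<dots> = T_sum (Suc m) k"
    using Suc.IH[of k] Suc.IH[of "k - 1"] Suc.prems by (simp only: T_sum_Suc) auto
  finally show ?case .
qed

end

theorem mainTheorem5:
  fixes a0 a1 a2 b0 b1 b2 :: real and n k :: nat
  assumes "k \<le> n"
  shows "T a0 a1 a2 b0 b1 b2 n (int k) =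
    (\<Sum>ps \<in> incseqs (n - k) n.
       (\<Prod>i = 1..n - k. (a2 + a1) * real (ps ! (i - 1)) - a1 * real i + a0) *
       (\<Prod>i = 1..k. b0 + (b1 + b2) * real i +
          b2 * (\<Sum>j < i. real (card {l \<in> {1..n - k}. int (ps ! (l - 1)) - int l = int j}))))"
  using T_eq_T_sum[OF assms] unfolding T_sum_def a_prod_def b_prod_def shift_count_def .

end
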